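(* For every $n \geq 3$, the set $\{D_n\}$ is equidistributed.
   Context: A linear arrangement of $\{1,\ldots,n\}$ is a sequence $a_1\cdots a_n$ in which each of $1,\ldots,n$ appears exactly once. It contains the pattern $ij$ if $a_t=i$ and $a_{t+1}=j$ for some $t$; otherwise it avoids it. $\{D_n\}$ is the set of linear arrangements of $\{1,\ldots,n\}$ avoiding all of the patterns $12, 23, \ldots, (n-1)n, n1$. For a set $X$ of linear arrangements of $\{1,\ldots,n\}$ and $i\in\{1,\ldots,n\}$, the class $X^{(i)}$ is the set of arrangements in $X$ whose first entry is $i$. $X$ is called equidistributed if it is partitioned into its nonempty classes and all nonempty classes $X^{(i)}$ have the same cardinality. *)

theory Defs
  imports Main
begin

definition linear_arrangement :: "nat \<Rightarrow> nat list \<Rightarrow> bool" where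
  "linear_arrangement n a \<longleftrightarrow> distinct a \<and> set a = {1..n}"

definition contains_pattern :: "nat list \<Rightarrow> nat \<Rightarrow> nat \<Rightarrow> bool" where
  "contains_pattern a i j \<longleftrightarrow> (\<exists>t. Suc t < length a \<and> a ! t = i \<and> a ! Suc t = j)"

definition D :: "nat \<Rightarrow> nat list set" where
  "D n = {a. linear_arrangement n a
              \<and> (\<forall>i\<in>{1..<n}. \<not> contains_pattern a i (i + 1))
              \<and> \<not> contains_pattern a n 1}"

definition arr_class :: "nat list set \<Rightarrow> nat \<Rightarrow> nat list set" where
  "arr_class X i = {a \<in> X. a \<noteq> [] \<and> hd a = i}"

definition equidistributed :: "nat \<Rightarrow> nat list set \<Rightarrow> bool" where
  "equidistributed n X \<longleftrightarrow>
     X = (\<Union>i\<in>{1..n}. arr_class X i)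
     \<and> (\<forall>i\<in>{1..n}. \<forall>j\<in>{1..n}. arr_class X i \<noteq> {} \<longrightarrow> arr_class X j \<noteq> {}
            \<longrightarrow> card (arr_class X i) = card (arr_class X j))"

end

theory Submission
  imports Defs
begin

text \<open>The forbidden patterns of \<open>D n\<close> are exactly the adjacencies \<open>x (x+1)\<close> taken
  cyclically mod \<open>n\<close>. Adding 1 mod \<open>n\<close> to every entry therefore maps \<open>D n\<close> onto itself,
  and it carries the arrangements starting with \<open>i\<close> bijectively onto those starting
  with \<open>i+1\<close> (mod \<open>n\<close>). Walking around the cycle, all classes have the same size.\<close>

definition cyclic_succ :: "nat \<Rightarrow> nat \<Rightarrow> nat" where
  "cyclic_succ n x = (if x = n then 1 else x + 1)"

definition cyclic_pred :: "nat \<Rightarrow> nat \<Rightarrow> nat" where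
  "cyclic_pred n x = (if x = 1 then n else x - 1)"

lemma cyclic_succ_in: "n \<ge> 1 \<Longrightarrow> x \<in> {1..n} \<Longrightarrow> cyclic_succ n x \<in> {1..n}"
  by (auto simp: cyclic_succ_def)

lemma cyclic_pred_succ: "n \<ge> 1 \<Longrightarrow> x \<in> {1..n} \<Longrightarrow> cyclic_pred n (cyclic_succ n x) = x"
  by (auto simp: cyclic_succ_def cyclic_pred_def)

lemma cyclic_succ_pred: "n \<ge> 1 \<Longrightarrow> x \<in> {1..n} \<Longrightarrow> cyclic_succ n (cyclic_pred n x) = x"
  by (auto simp: cyclic_succ_def cyclic_pred_def)

lemma bij_betw_cyclic_succ: "n \<ge> 1 \<Longrightarrow> bij_betw (cyclic_succ n) {1..n} {1..n}"
  by (rule bij_betw_byWitness[where f' = "cyclic_pred n"])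
     (auto simp: cyclic_succ_def cyclic_pred_def)

lemma bij_betw_cyclic_pred: "n \<ge> 1 \<Longrightarrow> bij_betw (cyclic_pred n) {1..n} {1..n}"
  by (rule bij_betw_byWitness[where f' = "cyclic_succ n"])
     (auto simp: cyclic_succ_def cyclic_pred_def)

lemma contains_cyclic_adjacency_iff:
  assumes "linear_arrangement n a"
  shows "(\<exists>i\<in>{1..<n}. contains_pattern a i (i + 1)) \<or> contains_pattern a n 1
    \<longleftrightarrow> (\<exists>t. Suc t < length a \<and> a ! Suc t = cyclic_succ n (a ! t))"
proof
  assume "\<exists>t. Suc t < length a \<and> a ! Suc t = cyclic_succ n (a ! t)"
  then obtain t where t: "Suc t < length a" "a ! Suc t = cyclic_succ n (a ! t)"
    by blast
  have "a ! t \<in> {1..n}"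
    using assms t(1) nth_mem[of t a] unfolding linear_arrangement_def by simp
  then show "(\<exists>i\<in>{1..<n}. contains_pattern a i (i + 1)) \<or> contains_pattern a n 1"
    using t unfolding contains_pattern_def cyclic_succ_def
    by (cases "a ! t = n") auto
qed (auto simp: contains_pattern_def cyclic_succ_def)

lemma D_iff_no_cyclic_succ:
  "a \<in> D n \<longleftrightarrow> linear_arrangement n a \<and>
     (\<forall>t. Suc t < length a \<longrightarrow> a ! Suc t \<noteq> cyclic_succ n (a ! t))"
  unfolding D_def using contains_cyclic_adjacency_iff[of n a] by blast

lemma D_set: "a \<in> D n \<Longrightarrow> set a = {1..n}"
  by (simp add: D_def linear_arrangement_def)

lemma D_length: "a \<in> D n \<Longrightarrow> length a = n"
  using distinct_card[of a] by (simp add: D_def linear_arrangement_def)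

lemma map_in_D:
  assumes n: "n \<ge> 1" and a: "a \<in> D n"
    and f: "bij_betw f {1..n} {1..n}"
    and comm: "\<And>x. x \<in> {1..n} \<Longrightarrow> cyclic_succ n (f x) = f (cyclic_succ n x)"
  shows "map f a \<in> D n"
proof -
  have la: "distinct a" "set a = {1..n}"
    using a by (auto simp: D_def linear_arrangement_def)
  have inj: "inj_on f {1..n}" and im: "f ` {1..n} = {1..n}"
    using f by (auto simp: bij_betw_def)
  have "\<forall>t. Suc t < length (map f a) \<longrightarrow> map f a ! Suc t \<noteq> cyclic_succ n (map f a ! t)"
  proof (intro allI impI notI)
    fix t
    assume t: "Suc t < length (map f a)"
    assume "map f a ! Suc t = cyclic_succ n (map f a ! t)"
    moreover have at: "a ! t \<in> {1..n}" "a ! Suc t \<in> {1..n}"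
      using la t by (auto dest: Suc_lessD)
    ultimately have "f (a ! Suc t) = f (cyclic_succ n (a ! t))"
      using t comm by simp
    then have "a ! Suc t = cyclic_succ n (a ! t)"
      using inj at cyclic_succ_in[OF n] by (meson inj_onD)
    then show False
      using a t by (simp add: D_iff_no_cyclic_succ)
  qed
  moreover have "linear_arrangement n (map f a)"
    using la inj im by (simp add: linear_arrangement_def distinct_map)
  ultimately show ?thesis
    unfolding D_iff_no_cyclic_succ by blast
qed

lemma bij_betw_arr_class_D_cyclic_succ:
  assumes n: "n \<ge> 1" and i: "i \<in> {1..n}"
  shows "bij_betw (map (cyclic_succ n)) (arr_class (D n) i) (arr_class (D n) (cyclic_succ n i))"
proof (rule bij_betw_byWitness[where f' = "map (cyclic_pred n)"])
  have succ_D: "map (cyclic_succ n) a \<in> D n" and pred_D: "map (cyclic_pred n) a \<in> D n"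
    if "a \<in> D n" for a
    using that n bij_betw_cyclic_succ bij_betw_cyclic_pred
    by (auto intro!: map_in_D simp: cyclic_succ_def cyclic_pred_def)
  have pred_succ: "map (cyclic_pred n) (map (cyclic_succ n) a) = a"
    and succ_pred: "map (cyclic_succ n) (map (cyclic_pred n) a) = a" if "a \<in> D n" for a
    using D_set[OF that] n cyclic_pred_succ cyclic_succ_pred
    by (auto intro!: map_idI)
  show "\<forall>a\<in>arr_class (D n) i. map (cyclic_pred n) (map (cyclic_succ n) a) = a"
    using pred_succ by (simp add: arr_class_def)
  show "\<forall>a\<in>arr_class (D n) (cyclic_succ n i). map (cyclic_succ n) (map (cyclic_pred n) a) = a"
    using succ_pred by (simp add: arr_class_def)
  show "map (cyclic_succ n) ` arr_class (D n) i \<subseteq> arr_class (D n) (cyclic_succ n i)"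
    using succ_D by (auto simp: arr_class_def hd_map)
  show "map (cyclic_pred n) ` arr_class (D n) (cyclic_succ n i) \<subseteq> arr_class (D n) i"
    using pred_D cyclic_pred_succ[OF n i] by (auto simp: arr_class_def hd_map)
qed

lemma card_arr_class_D_eq_first:
  assumes "1 \<le> i" "i \<le> n"
  shows "card (arr_class (D n) i) = card (arr_class (D n) 1)"
  using assms
proof (induction i rule: nat_induct_at_least)
  case (Suc i)
  then have "i \<in> {1..n}" "cyclic_succ n i = Suc i"
    by (auto simp: cyclic_succ_def)
  then show ?case
    using Suc bij_betw_same_card[OF bij_betw_arr_class_D_cyclic_succ] by simp
qed simp

lemma D_eq_Union_arr_class:
  assumes "n \<ge> 1"
  shows "D n = (\<Union>i\<in>{1..n}. arr_class (D n) i)"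
proof -
  have "a \<in> arr_class (D n) (hd a)" "hd a \<in> {1..n}" if "a \<in> D n" for a
  proof -
    have "a \<noteq> []"
      using D_length[OF that] assms by auto
    then show "a \<in> arr_class (D n) (hd a)" "hd a \<in> {1..n}"
      using that D_set[OF that] hd_in_set[of a] by (auto simp: arr_class_def)
  qed
  then show ?thesis
    by (auto simp: arr_class_def)
qed

lemma equidistributed_D:
  assumes "n \<ge> 1"
  shows "equidistributed n (D n)"
proof -
  have "card (arr_class (D n) i) = card (arr_class (D n) j)"
    if "i \<in> {1..n}" "j \<in> {1..n}" for i j
    using that card_arr_class_D_eq_first[of i n] card_arr_class_D_eq_first[of j n] by simp
  then show ?thesis
    using D_eq_Union_arr_class[OF assms] unfolding equidistributed_def by blast
qed

theorem proposition4p3: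
  fixes n :: nat
  assumes "n \<ge> 3"
  shows "equidistributed n (D n)"
  using assms by (simp add: equidistributed_D)

end
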